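(* There is no formula $A$ of $\mathbf{L_1}$ such that both $\vdash_H A$ and $\dashv_H A$.
   Context: Formulas of $\mathbf{L_1}$: built from atomic formulas $\epsilon ab$ ($a,b$ name variables, possibly equal) with primitive connectives $\vee,\sim$; $\wedge,\supset,\equiv$ defined as usual. Disjunctions may be associated in any way. $\vdash_H A$: $A$ belongs to the smallest set containing all instances of classical propositional tautologies and all formulas $\epsilon ab\supset\epsilon aa$, $(\epsilon ab\wedge\epsilon bc)\supset\epsilon ac$, $(\epsilon ab\wedge\epsilon bb)\supset\epsilon ba$, closed under modus ponens. Positive/negative parts (occurrences): $A$ is a positive part of $A$; if $B\vee C$ is a positive part then $B,C$ are positive parts; if $\sim B$ is a positive part then $B$ is a negative part; if $\sim B$ is a negative part then $B$ is a positive part. $F[B_+,B_-]$ denotes a formula in which some $B$ has one occurrence as positive part and another non-overlapping occurrence as negative part. Hintikka formula: a formula $H$ such that (1) $H$ is not of the form $F[B_+,B_-]$; (2) if $B\vee C$ is a negative part of $H$ then $B$ or $C$ is; (3) if $\epsilon ab$ is a negative part then so is $\epsilon aa$; (4) if $\epsilon ab,\epsilon bc$ are negative parts then so is $\epsilon ac$; (5) if $\epsilon ab,\epsilon bb$ are negative parts then so is $\epsilon ba$. $\mathbf{HAR}$: fix a name variable $a_0$; $\dashv_H$ is the smallest set such that $\dashv_H\epsilon a_0a_0$; $\dashv_H\sim\epsilon a_0a_0$; if $\vdash_H A\supset B$ and $\dashv_H B$ then $\dashv_H A$; if $\dashv_H A$ and $A$ is obtained from $B$ by uniform substitution of name variables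 for name variables then $\dashv_H B$; if $A$ is a Hintikka formula that is a disjunction of atomic or negated atomic formulas, $\dashv_H A$, and $\epsilon ab$ is not a negative part of $A$, then $\dashv_H A\vee\epsilon ab$. *)

theory Defs
  imports Main
begin

type_synonym name = nat

datatype fm = Eps name name | Or fm fm | Neg fm

definition And :: "fm \<Rightarrow> fm \<Rightarrow> fm" where
  "And A B = Neg (Or (Neg A) (Neg B))"
definition Imp :: "fm \<Rightarrow> fm \<Rightarrow> fm" where
  "Imp A B = Or (Neg A) B"
definition Iff :: "fm \<Rightarrow> fm \<Rightarrow> fm" where
  "Iff A B = And (Imp A B) (Imp B A)"

fun eval :: "(name \<Rightarrow> name \<Rightarrow> bool) \<Rightarrow> fm \<Rightarrow> bool" where
  "eval v (Eps a b) = v a b"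
| "eval v (Or A B) = (eval v A \<or> eval v B)"
| "eval v (Neg A) = (\<not> eval v A)"

definition taut_inst :: "fm \<Rightarrow> bool" where
  "taut_inst A \<longleftrightarrow> (\<forall>v. eval v A)"

inductive prov :: "fm \<Rightarrow> bool" where
  taut: "taut_inst A \<Longrightarrow> prov A"
| ax1: "prov (Imp (Eps a b) (Eps a a))"
| ax2: "prov (Imp (And (Eps a b) (Eps b c)) (Eps a c))"
| ax3: "prov (Imp (And (Eps a b) (Eps b b)) (Eps b a))"
| mp: "prov (Imp A B) \<Longrightarrow> prov A \<Longrightarrow> prov B"

text \<open>Occurrences of positive/negative parts: (position, polarity, subformula);
  polarity True = positive part, False = negative part.  Positions are paths
  (0 = left disjunct / argument of negation, 1 = right disjunct).\<close>
fun parts :: "bool \<Rightarrow> fm \<Rightarrow> (nat list \<times> bool \<times> fm) set" where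
  "parts s (Eps a b) = {([], s, Eps a b)}"
| "parts s (Or B C) = {([], s, Or B C)} \<union>
     (if s then {(0 # p, t, D) | p t D. (p, t, D) \<in> parts True B}
              \<union> {(1 # p, t, D) | p t D. (p, t, D) \<in> parts True C}
      else {})"
| "parts s (Neg B) = {([], s, Neg B)} \<union> {(0 # p, t, D) | p t D. (p, t, D) \<in> parts (\<not> s) B}"

definition pos_part :: "fm \<Rightarrow> fm \<Rightarrow> bool" where
  "pos_part B A \<longleftrightarrow> (\<exists>p. (p, True, B) \<in> parts True A)"
definition neg_part :: "fm \<Rightarrow> fm \<Rightarrow> bool" where
  "neg_part B A \<longleftrightarrow> (\<exists>p. (p, False, B) \<in> parts True A)"

text \<open>A has the form F[B+,B-]: some B occurs as positive part and, at a
  non-overlapping position, as negative part.\<close>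
definition has_pos_neg :: "fm \<Rightarrow> bool" where
  "has_pos_neg A \<longleftrightarrow> (\<exists>B p q. (p, True, B) \<in> parts True A \<and> (q, False, B) \<in> parts True A
      \<and> (\<nexists>r. q = p @ r) \<and> (\<nexists>r. p = q @ r))"

definition hintikka :: "fm \<Rightarrow> bool" where
  "hintikka H \<longleftrightarrow>
     \<not> has_pos_neg H
   \<and> (\<forall>B C. neg_part (Or B C) H \<longrightarrow> neg_part B H \<or> neg_part C H)
   \<and> (\<forall>a b. neg_part (Eps a b) H \<longrightarrow> neg_part (Eps a a) H)
   \<and> (\<forall>a b c. neg_part (Eps a b) H \<and> neg_part (Eps b c) H \<longrightarrow> neg_part (Eps a c) H)
   \<and> (\<forall>a b. neg_part (Eps a b) H \<and> neg_part (Eps b b) H \<longrightarrow> neg_part (Eps b a) H)"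

inductive lit_disj :: "fm \<Rightarrow> bool" where
  "lit_disj (Eps a b)"
| "lit_disj (Neg (Eps a b))"
| "lit_disj A \<Longrightarrow> lit_disj B \<Longrightarrow> lit_disj (Or A B)"

fun subst :: "(name \<Rightarrow> name) \<Rightarrow> fm \<Rightarrow> fm" where
  "subst f (Eps a b) = Eps (f a) (f b)"
| "subst f (Or A B) = Or (subst f A) (subst f B)"
| "subst f (Neg A) = Neg (subst f A)"

inductive refut :: "name \<Rightarrow> fm \<Rightarrow> bool" for a0 :: name where
  r_base1: "refut a0 (Eps a0 a0)"
| r_base2: "refut a0 (Neg (Eps a0 a0))"
| r_back: "prov (Imp A B) \<Longrightarrow> refut a0 B \<Longrightarrow> refut a0 A"
| r_subst: "refut a0 A \<Longrightarrow> A = subst f B \<Longrightarrow> refut a0 B"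
| r_ext: "hintikka A \<Longrightarrow> lit_disj A \<Longrightarrow> refut a0 A \<Longrightarrow> \<not> neg_part (Eps a b) A
          \<Longrightarrow> refut a0 (Or A (Eps a b))"

end

theory Submission
  imports Defs
begin

text \<open>Read the atoms \<open>\<epsilon>ab\<close> as propositional variables constrained by the three axioms.
  Provable formulas are true under every valuation respecting these constraints, while every
  refutable formula is false under some such valuation; so no formula is both.  The only
  non-routine case is the extension rule: for a Hintikka literal disjunction \<open>A\<close>, make true
  exactly those atoms that are negative parts of \<open>A\<close>.  Conditions (3)--(5) make this valuation
  respect the axioms, condition (1) makes it falsify every literal of \<open>A\<close>, and \<open>\<epsilon>ab\<close> is false
  because it is not a negative part of \<open>A\<close>.\<close>

definition admissible_val :: "(name \<Rightarrow> name \<Rightarrow> bool) \<Rightarrow> bool" where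
  "admissible_val v \<longleftrightarrow> (\<forall>a b. v a b \<longrightarrow> v a a) \<and> (\<forall>a b c. v a b \<and> v b c \<longrightarrow> v a c)
     \<and> (\<forall>a b. v a b \<and> v b b \<longrightarrow> v b a)"

lemma prov_imp_eval:
  assumes "prov A" and "admissible_val v"
  shows "eval v A"
  using assms
proof (induction rule: prov.induct)
  case (taut A)
  then show ?case unfolding taut_inst_def by blast
next
  case (mp A B)
  then show ?case unfolding Imp_def by simp
qed (unfold admissible_val_def Imp_def And_def eval.simps, blast+)

lemma eval_subst: "eval v (subst f A) = eval (\<lambda>x y. v (f x) (f y)) A"
  by (induction A) auto

lemma admissible_val_comp:
  "admissible_val v \<Longrightarrow> admissible_val (\<lambda>x y. v (f x) (f y))"
  unfolding admissible_val_def by blast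

lemma parts_Nil_in_parts: "([], t, D) \<in> parts s A \<Longrightarrow> t = s \<and> D = A"
  by (cases A) (auto split: if_splits)

lemma parts_append_in_parts:
  "(p, t, D) \<in> parts s A \<Longrightarrow> (p @ q, t', D') \<in> parts s A \<Longrightarrow> (q, t', D') \<in> parts t D"
proof (induction A arbitrary: s p)
  case (Eps a b)
  then show ?case by auto
next
  case (Or B C)
  then show ?case
    by (cases p) (auto dest: parts_Nil_in_parts split: if_splits)
next
  case (Neg B)
  then show ?case
    by (cases p) (auto dest: parts_Nil_in_parts)
qed

lemma lit_disj_eval_False:
  assumes "lit_disj A"
    and "\<forall>p x y. (p, True, Eps x y) \<in> parts True A \<longrightarrow> \<not> v x y"
    and "\<forall>p x y. (p, False, Eps x y) \<in> parts True A \<longrightarrow> v x y"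
  shows "\<not> eval v A"
  using assms
proof (induction rule: lit_disj.induct)
  case (3 A B)
  have left: "(0 # p, t, D) \<in> parts True (Or A B)" if "(p, t, D) \<in> parts True A" for p t D
    using that by simp
  have right: "(Suc 0 # p, t, D) \<in> parts True (Or A B)" if "(p, t, D) \<in> parts True B" for p t D
    using that by simp
  have "\<not> eval v A"
    by (rule "3.IH"(1)) (use "3.prems" left in blast)+
  moreover have "\<not> eval v B"
    by (rule "3.IH"(2)) (use "3.prems" right in blast)+
  ultimately show ?case
    by simp
qed fastforce+

lemma hintikka_admissible_val:
  "hintikka A \<Longrightarrow> admissible_val (\<lambda>x y. neg_part (Eps x y) A)"
  unfolding hintikka_def admissible_val_def by blast

lemma hintikka_pos_part_not_neg_part:
  assumes "hintikka A" and pos: "(p, True, Eps x y) \<in> parts True A"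
  shows "\<not> neg_part (Eps x y) A"
proof
  assume "neg_part (Eps x y) A"
  then obtain q where neg: "(q, False, Eps x y) \<in> parts True A"
    unfolding neg_part_def by blast
  \<comment> \<open>An atom has no proper parts, so the two occurrences cannot overlap.\<close>
  have "(r, False, Eps x y) \<notin> parts True (Eps x y)" for r
    by simp
  then have neg_not_below: "\<nexists>r. q = p @ r"
    using parts_append_in_parts[OF pos] neg by blast
  have "(r, True, Eps x y) \<notin> parts False (Eps x y)" for r
    by simp
  then have pos_not_below: "\<nexists>r. p = q @ r"
    using parts_append_in_parts[OF neg] pos by blast
  show False
    using assms(1) pos neg neg_not_below pos_not_below unfolding hintikka_def has_pos_neg_def by blast
qed

lemma hintikka_lit_disj_eval_False:
  assumes "hintikka A" and "lit_disj A"
  shows "\<not> eval (\<lambda>x y. neg_part (Eps x y) A) A"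
proof (rule lit_disj_eval_False[OF assms(2)])
  show "\<forall>p x y. (p, True, Eps x y) \<in> parts True A \<longrightarrow> \<not> neg_part (Eps x y) A"
    using hintikka_pos_part_not_neg_part[OF assms(1)] by blast
  show "\<forall>p x y. (p, False, Eps x y) \<in> parts True A \<longrightarrow> neg_part (Eps x y) A"
    unfolding neg_part_def by blast
qed

lemma refut_imp_countermodel:
  "refut a0 A \<Longrightarrow> \<exists>v. admissible_val v \<and> \<not> eval v A"
proof (induction rule: refut.induct)
  case r_base1
  show ?case by (rule exI[of _ "\<lambda>x y. False"]) (simp add: admissible_val_def)
next
  case r_base2
  show ?case by (rule exI[of _ "\<lambda>x y. True"]) (simp add: admissible_val_def)
next
  case (r_back A B)
  then obtain v where "admissible_val v" "\<not> eval v B"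
    by blast
  moreover have "eval v (Imp A B)"
    using prov_imp_eval r_back.hyps(1) \<open>admissible_val v\<close> by blast
  ultimately show ?case
    unfolding Imp_def by auto
next
  case (r_subst A f B)
  then show ?case using admissible_val_comp eval_subst by metis
next
  case (r_ext A a b)
  have "\<not> eval (\<lambda>x y. neg_part (Eps x y) A) (Eps a b)"
    using r_ext.hyps(4) by simp
  then show ?case
    using hintikka_admissible_val[OF r_ext.hyps(1)] hintikka_lit_disj_eval_False[OF r_ext.hyps(1,2)]
    by auto
qed

theorem theorem6p4:
  fixes a0 :: name
  shows "\<not> (\<exists>A. prov A \<and> refut a0 A)"
  using prov_imp_eval refut_imp_countermodel by blast

end
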